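(* Let $k \to B \xrightarrow{i} A \xrightarrow{p} H \to k$ be an exact sequence of Hopf algebras and let $M$ be a projective left $A$-module. Then $\mathrm{Tor}^H_n(k_\varepsilon, M/B^+M) = 0$ for all $n\ge 1$, where $M/B^+M\simeq\mathrm{Tor}^B_0(k_\varepsilon,M)$ is a left $H$-module via $p(a)\cdot\pi_M(m) = \pi_M(am)$ ($\pi_M: M\to M/B^+M$ the projection).
   Context: Exact sequence of Hopf algebras: $i$ injective, $p$ surjective, $\ker(p) = i(B)^+A = A\,i(B)^+$ (with $B^+=\ker\varepsilon$), and $i(B) = \{a : a_{(1)}\otimes p(a_{(2)})=a\otimes 1\} = \{a : p(a_{(1)})\otimes a_{(2)} = 1\otimes a\}$; $B$ identified with $i(B)$. $k_\varepsilon$ is $k$ with trivial right action via the counit. *)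

theory Defs
  imports Main
begin

section \<open>Vector spaces, algebras, Hopf algebras over a field 'k (carrier = whole type)\<close>

record ('k, 'a) kvs =
  vadd   :: "'a \<Rightarrow> 'a \<Rightarrow> 'a"
  vzero  :: "'a"
  vsmult :: "'k \<Rightarrow> 'a \<Rightarrow> 'a"

record ('k, 'a) kalg = "('k, 'a) kvs" +
  amult :: "'a \<Rightarrow> 'a \<Rightarrow> 'a"
  aone  :: "'a"

text \<open>Comultiplication takes values in A (x) A; an element of A (x) A is represented by a
  finite list of pairs (a representative sum of simple tensors).  Two such representatives
  denote the same tensor iff they agree on all products of linear functionals
  (for vector spaces over a field the canonical map A (x) A' -> (A* x A'*)-bilinear forms is
  injective), so all axioms involving tensors are stated through such evaluations.\<close>

record ('k, 'a) hopf = "('k, 'a) kalg" +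
  comul    :: "'a \<Rightarrow> ('a \<times> 'a) list"
  counit   :: "'a \<Rightarrow> 'k"
  antipode :: "'a \<Rightarrow> 'a"

definition vsum :: "('k, 'a, 'z) kvs_scheme \<Rightarrow> 'a list \<Rightarrow> 'a" where
  "vsum V xs = foldr (vadd V) xs (vzero V)"

definition vector_space :: "('k::field, 'a, 'z) kvs_scheme \<Rightarrow> bool" where
  "vector_space V \<longleftrightarrow>
     (\<forall>x y z. vadd V (vadd V x y) z = vadd V x (vadd V y z)) \<and>
     (\<forall>x y. vadd V x y = vadd V y x) \<and>
     (\<forall>x. vadd V x (vzero V) = x) \<and>
     (\<forall>x. vadd V x (vsmult V (-1) x) = vzero V) \<and>
     (\<forall>c x y. vsmult V c (vadd V x y) = vadd V (vsmult V c x) (vsmult V c y)) \<and>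
     (\<forall>c d x. vsmult V (c + d) x = vadd V (vsmult V c x) (vsmult V d x)) \<and>
     (\<forall>c d x. vsmult V (c * d) x = vsmult V c (vsmult V d x)) \<and>
     (\<forall>x. vsmult V 1 x = x)"

definition lin_fun :: "('k::field, 'a, 'z) kvs_scheme \<Rightarrow> ('a \<Rightarrow> 'k) \<Rightarrow> bool" where
  "lin_fun V \<phi> \<longleftrightarrow> (\<forall>x y. \<phi> (vadd V x y) = \<phi> x + \<phi> y) \<and> (\<forall>c x. \<phi> (vsmult V c x) = c * \<phi> x)"

definition lin_map :: "('k::field, 'a, 'z) kvs_scheme \<Rightarrow> ('k, 'b, 'w) kvs_scheme \<Rightarrow> ('a \<Rightarrow> 'b) \<Rightarrow> bool" where
  "lin_map V W f \<longleftrightarrow> (\<forall>x y. f (vadd V x y) = vadd W (f x) (f y)) \<and>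
                       (\<forall>c x. f (vsmult V c x) = vsmult W c (f x))"

definition k_algebra :: "('k::field, 'a, 'z) kalg_scheme \<Rightarrow> bool" where
  "k_algebra A \<longleftrightarrow> vector_space A \<and>
     (\<forall>x y z. amult A (amult A x y) z = amult A x (amult A y z)) \<and>
     (\<forall>x. amult A (aone A) x = x) \<and> (\<forall>x. amult A x (aone A) = x) \<and>
     (\<forall>x y z. amult A x (vadd A y z) = vadd A (amult A x y) (amult A x z)) \<and>
     (\<forall>x y z. amult A (vadd A x y) z = vadd A (amult A x z) (amult A y z)) \<and>
     (\<forall>c x y. amult A (vsmult A c x) y = vsmult A c (amult A x y)) \<and>
     (\<forall>c x y. amult A x (vsmult A c y) = vsmult A c (amult A x y))"

definition ev2 :: "('a \<Rightarrow> 'k::field) \<Rightarrow> ('b \<Rightarrow> 'k) \<Rightarrow> ('a \<times> 'b) list \<Rightarrow> 'k" where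
  "ev2 \<phi> \<psi> t = (\<Sum>(x, y)\<leftarrow>t. \<phi> x * \<psi> y)"

definition bialgebra :: "('k::field, 'a, 'z) hopf_scheme \<Rightarrow> bool" where
  "bialgebra H \<longleftrightarrow> k_algebra H \<and>
     \<comment> \<open>comultiplication is linear\<close>
     (\<forall>\<phi> \<psi>. lin_fun H \<phi> \<and> lin_fun H \<psi> \<longrightarrow>
        (\<forall>x y. ev2 \<phi> \<psi> (comul H (vadd H x y)) = ev2 \<phi> \<psi> (comul H x) + ev2 \<phi> \<psi> (comul H y)) \<and>
        (\<forall>c x. ev2 \<phi> \<psi> (comul H (vsmult H c x)) = c * ev2 \<phi> \<psi> (comul H x))) \<and>
     \<comment> \<open>coassociativity\<close>
     (\<forall>\<phi>1 \<phi>2 \<phi>3. lin_fun H \<phi>1 \<and> lin_fun H \<phi>2 \<and> lin_fun H \<phi>3 \<longrightarrow>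
        (\<forall>a. (\<Sum>(x, y)\<leftarrow>comul H a. ev2 \<phi>1 \<phi>2 (comul H x) * \<phi>3 y) =
             (\<Sum>(x, y)\<leftarrow>comul H a. \<phi>1 x * ev2 \<phi>2 \<phi>3 (comul H y)))) \<and>
     \<comment> \<open>counit\<close>
     lin_fun H (counit H) \<and>
     (\<forall>a. vsum H (map (\<lambda>(x, y). vsmult H (counit H x) y) (comul H a)) = a) \<and>
     (\<forall>a. vsum H (map (\<lambda>(x, y). vsmult H (counit H y) x) (comul H a)) = a) \<and>
     \<comment> \<open>comultiplication and counit are algebra maps\<close>
     (\<forall>\<phi> \<psi>. lin_fun H \<phi> \<and> lin_fun H \<psi> \<longrightarrow>
        (\<forall>a b. ev2 \<phi> \<psi> (comul H (amult H a b)) =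
               (\<Sum>(x, y)\<leftarrow>comul H a. \<Sum>(x', y')\<leftarrow>comul H b. \<phi> (amult H x x') * \<psi> (amult H y y'))) \<and>
        ev2 \<phi> \<psi> (comul H (aone H)) = \<phi> (aone H) * \<psi> (aone H)) \<and>
     (\<forall>a b. counit H (amult H a b) = counit H a * counit H b) \<and>
     counit H (aone H) = 1"

definition hopf_algebra :: "('k::field, 'a, 'z) hopf_scheme \<Rightarrow> bool" where
  "hopf_algebra H \<longleftrightarrow> bialgebra H \<and> lin_map H H (antipode H) \<and>
     (\<forall>a. vsum H (map (\<lambda>(x, y). amult H (antipode H x) y) (comul H a)) = vsmult H (counit H a) (aone H)) \<and>
     (\<forall>a. vsum H (map (\<lambda>(x, y). amult H x (antipode H y)) (comul H a)) = vsmult H (counit H a) (aone H))"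

text \<open>Morphism of Hopf algebras (= bialgebra morphism; compatibility with antipodes is automatic).\<close>
definition hopf_hom :: "('k::field, 'a, 'z) hopf_scheme \<Rightarrow> ('k, 'b, 'w) hopf_scheme \<Rightarrow> ('a \<Rightarrow> 'b) \<Rightarrow> bool" where
  "hopf_hom A H f \<longleftrightarrow> lin_map A H f \<and>
     (\<forall>x y. f (amult A x y) = amult H (f x) (f y)) \<and> f (aone A) = aone H \<and>
     (\<forall>\<phi> \<psi>. lin_fun H \<phi> \<and> lin_fun H \<psi> \<longrightarrow>
        (\<forall>a. ev2 \<phi> \<psi> (comul H (f a)) = ev2 (\<phi> \<circ> f) (\<psi> \<circ> f) (comul A a))) \<and>
     (\<forall>a. counit H (f a) = counit A a)"

definition exact_hopf_seq ::
  "('k::field, 'b, 'z1) hopf_scheme \<Rightarrow> ('k, 'a, 'z2) hopf_scheme \<Rightarrow> ('k, 'h, 'z3) hopf_scheme \<Rightarrow>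
   ('b \<Rightarrow> 'a) \<Rightarrow> ('a \<Rightarrow> 'h) \<Rightarrow> bool" where
  "exact_hopf_seq B A H i p \<longleftrightarrow>
     hopf_algebra B \<and> hopf_algebra A \<and> hopf_algebra H \<and>
     hopf_hom B A i \<and> hopf_hom A H p \<and> inj i \<and> surj p \<and>
     \<comment> \<open>ker p = i(B)^+ A\<close>
     {a. p a = vzero H} =
       {vsum A (map (\<lambda>(b, x). amult A (i b) x) l) | l. \<forall>(b, x)\<in>set l. counit B b = 0} \<and>
     \<comment> \<open>ker p = A i(B)^+\<close>
     {a. p a = vzero H} =
       {vsum A (map (\<lambda>(b, x). amult A x (i b)) l) | l. \<forall>(b, x)\<in>set l. counit B b = 0} \<and>
     \<comment> \<open>i(B) = {a. a_(1) (x) p(a_(2)) = a (x) 1}\<close>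
     range i = {a. \<forall>\<phi> \<psi>. lin_fun A \<phi> \<and> lin_fun H \<psi> \<longrightarrow>
                      (\<Sum>(x, y)\<leftarrow>comul A a. \<phi> x * \<psi> (p y)) = \<phi> a * \<psi> (aone H)} \<and>
     \<comment> \<open>i(B) = {a. p(a_(1)) (x) a_(2) = 1 (x) a}\<close>
     range i = {a. \<forall>\<psi> \<phi>. lin_fun H \<psi> \<and> lin_fun A \<phi> \<longrightarrow>
                      (\<Sum>(x, y)\<leftarrow>comul A a. \<psi> (p x) * \<phi> y) = \<psi> (aone H) * \<phi> a}"

record ('a, 'm) lmod =
  mcarrier :: "'m set"
  madd  :: "'m \<Rightarrow> 'm \<Rightarrow> 'm"
  mzero :: "'m"
  act   :: "'a \<Rightarrow> 'm \<Rightarrow> 'm"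

definition msum :: "('a, 'm) lmod \<Rightarrow> 'm list \<Rightarrow> 'm" where
  "msum M xs = foldr (madd M) xs (mzero M)"

text \<open>Left module over a k-algebra A (the k-structure is the one induced via k -> A).\<close>
definition lmodule :: "('k::field, 'a, 'z) kalg_scheme \<Rightarrow> ('a, 'm) lmod \<Rightarrow> bool" where
  "lmodule A M \<longleftrightarrow>
     mzero M \<in> mcarrier M \<and>
     (\<forall>x\<in>mcarrier M. \<forall>y\<in>mcarrier M. madd M x y \<in> mcarrier M) \<and>
     (\<forall>a. \<forall>x\<in>mcarrier M. act M a x \<in> mcarrier M) \<and>
     (\<forall>x\<in>mcarrier M. \<forall>y\<in>mcarrier M. \<forall>z\<in>mcarrier M. madd M (madd M x y) z = madd M x (madd M y z)) \<and>
     (\<forall>x\<in>mcarrier M. \<forall>y\<in>mcarrier M. madd M x y = madd M y x) \<and>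
     (\<forall>x\<in>mcarrier M. madd M x (mzero M) = x) \<and>
     (\<forall>x\<in>mcarrier M. madd M x (act M (vsmult A (-1) (aone A)) x) = mzero M) \<and>
     (\<forall>a b. \<forall>x\<in>mcarrier M. act M (vadd A a b) x = madd M (act M a x) (act M b x)) \<and>
     (\<forall>a. \<forall>x\<in>mcarrier M. \<forall>y\<in>mcarrier M. act M a (madd M x y) = madd M (act M a x) (act M a y)) \<and>
     (\<forall>a b. \<forall>x\<in>mcarrier M. act M (amult A a b) x = act M a (act M b x)) \<and>
     (\<forall>x\<in>mcarrier M. act M (aone A) x = x)"

definition mod_hom :: "('a, 'm) lmod \<Rightarrow> ('a, 'n) lmod \<Rightarrow> ('m \<Rightarrow> 'n) \<Rightarrow> bool" where
  "mod_hom M N f \<longleftrightarrow> f ` mcarrier M \<subseteq> mcarrier N \<and>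
     (\<forall>x\<in>mcarrier M. \<forall>y\<in>mcarrier M. f (madd M x y) = madd N (f x) (f y)) \<and>
     (\<forall>a. \<forall>x\<in>mcarrier M. f (act M a x) = act N a (f x))"

definition free_mod :: "('k::field, 'a, 'z) kalg_scheme \<Rightarrow> 'x set \<Rightarrow> ('a, 'x \<Rightarrow> 'a) lmod" where
  "free_mod A X =
     \<lparr> mcarrier = {f. finite {x. f x \<noteq> vzero A} \<and> {x. f x \<noteq> vzero A} \<subseteq> X},
       madd = (\<lambda>f g x. vadd A (f x) (g x)),
       mzero = (\<lambda>x. vzero A),
       act = (\<lambda>a f x. amult A a (f x)) \<rparr>"

text \<open>Projective module: a direct summand (retract) of a free module.  It suffices to use the
  free module on the underlying set of M (every projective M is a retract of it).\<close>
definition projective :: "('k::field, 'a, 'z) kalg_scheme \<Rightarrow> ('a, 'm) lmod \<Rightarrow> bool" where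
  "projective A M \<longleftrightarrow> lmodule A M \<and>
     (\<exists>s r. mod_hom M (free_mod A (mcarrier M)) s \<and> mod_hom (free_mod A (mcarrier M)) M r \<and>
            (\<forall>x\<in>mcarrier M. r (s x) = x))"

definition aug_sub :: "('k::field, 'b, 'z) hopf_scheme \<Rightarrow> ('b \<Rightarrow> 'a) \<Rightarrow> ('a, 'm) lmod \<Rightarrow> 'm set" where
  "aug_sub B i M = {msum M (map (\<lambda>(b, x). act M (i b) x) l) | l.
                      \<forall>(b, x)\<in>set l. counit B b = 0 \<and> x \<in> mcarrier M}"

definition coset_of :: "('a, 'm) lmod \<Rightarrow> 'm set \<Rightarrow> 'm \<Rightarrow> 'm set" where
  "coset_of M K x = {madd M x u | u. u \<in> K}"

definition quot_mod :: "('k::field, 'b, 'z) hopf_scheme \<Rightarrow> ('b \<Rightarrow> 'a) \<Rightarrow> ('a \<Rightarrow> 'h) \<Rightarrow> ('a, 'm) lmod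
                        \<Rightarrow> ('h, 'm set) lmod" where
  "quot_mod B i p M =
     (let K = aug_sub B i M; \<pi> = coset_of M K in
      \<lparr> mcarrier = \<pi> ` mcarrier M,
        madd = (\<lambda>X Y. \<pi> (madd M (SOME x. x \<in> X) (SOME y. y \<in> Y))),
        mzero = \<pi> (mzero M),
        act = (\<lambda>h X. \<pi> (act M (SOME a. p a = h) (SOME x. x \<in> X))) \<rparr>)"

text \<open>A projective resolution  ... -> P 2 -d 1-> P 1 -d 0-> P 0 -e-> N -> 0  of left H-modules.\<close>
definition proj_resolution ::
  "('k::field, 'h, 'z) kalg_scheme \<Rightarrow> ('h, 'n) lmod \<Rightarrow> (nat \<Rightarrow> ('h, 'c) lmod) \<Rightarrow> (nat \<Rightarrow> 'c \<Rightarrow> 'c)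
   \<Rightarrow> ('c \<Rightarrow> 'n) \<Rightarrow> bool" where
  "proj_resolution H N P d e \<longleftrightarrow>
     (\<forall>n. projective H (P n)) \<and>
     (\<forall>n. mod_hom (P (Suc n)) (P n) (d n)) \<and>
     mod_hom (P 0) N e \<and>
     e ` mcarrier (P 0) = mcarrier N \<and>
     {x \<in> mcarrier (P 0). e x = mzero N} = d 0 ` mcarrier (P 1) \<and>
     (\<forall>n. {x \<in> mcarrier (P (Suc n)). d n x = mzero (P n)} = d (Suc n) ` mcarrier (P (Suc (Suc n))))"

text \<open>H^+ P, the submodule spanned by h x with epsilon(h) = 0; k_epsilon (x)_H P = P / H^+ P.\<close>
definition aug_mod :: "('k::field, 'h, 'z) hopf_scheme \<Rightarrow> ('h, 'c) lmod \<Rightarrow> 'c set" where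
  "aug_mod H P = {msum P (map (\<lambda>(h, x). act P h x) l) | l.
                    \<forall>(h, x)\<in>set l. counit H h = 0 \<and> x \<in> mcarrier P}"

text \<open>Vanishing of the n-th homology (n \<ge> 1) of the complex k_epsilon (x)_H P = P / H^+ P,
  i.e. Tor^H_n(k_epsilon, N) = 0 when P is a projective resolution of N:
  every cycle of P_n / H^+P_n is a boundary.\<close>
definition tor_homology_vanishes ::
  "('k::field, 'h, 'z) hopf_scheme \<Rightarrow> (nat \<Rightarrow> ('h, 'c) lmod) \<Rightarrow> (nat \<Rightarrow> 'c \<Rightarrow> 'c) \<Rightarrow> nat \<Rightarrow> bool" where
  "tor_homology_vanishes H P d n \<longleftrightarrow>
     (case n of 0 \<Rightarrow> True
      | Suc m \<Rightarrow>
         {x \<in> mcarrier (P (Suc m)). d m x \<in> aug_mod H (P m)} \<subseteq>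
         {madd (P (Suc m)) (d (Suc m) y) u | y u. y \<in> mcarrier (P (Suc (Suc m))) \<and> u \<in> aug_mod H (P (Suc m))})"

end

theory Submission
  imports Defs "HOL-Algebra.FiniteProduct"
begin

text \<open>
  Since \<open>p\<close> is surjective with kernel \<open>i(B)\<^sup>+A\<close>, the quotient \<open>M/B\<^sup>+M\<close> is the base change of
  \<open>M\<close> along \<open>p\<close>, and base change preserves projectivity: given an \<open>H\<close>-linear surjection
  \<open>e: X \<rightarrow> M/B\<^sup>+M\<close>, lift the projection \<open>M \<rightarrow> M/B\<^sup>+M\<close> through \<open>e\<close> by projectivity of \<open>M\<close>
  over \<open>A\<close>; the lift kills \<open>B\<^sup>+M\<close> because \<open>p(i(B\<^sup>+)) = 0\<close>, so it descends to an \<open>H\<close>-linear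
  section of \<open>e\<close>. A projective resolution whose augmentation splits admits a contracting
  homotopy \<open>d\<sigma> + \<tau>d = id\<close>, built degree by degree from the projectivity of each \<open>P\<^sub>n\<close>.
  Module maps preserve \<open>H\<^sup>+P\<close>, so the homotopy survives \<open>k\<^sub>\<epsilon> \<otimes>\<^sub>H -\<close>, and every cycle
  of \<open>P\<^sub>n/H\<^sup>+P\<^sub>n\<close> with \<open>n \<ge> 1\<close> is a boundary.
\<close>

definition mneg :: "('k::field, 'a, 'z) kalg_scheme \<Rightarrow> ('a, 'm) lmod \<Rightarrow> 'm \<Rightarrow> 'm" where
  "mneg R X x = act X (vsmult R (-1) (aone R)) x"

context
  fixes R :: "('k::field, 'a, 'z) kalg_scheme" and X :: "('a, 'm) lmod"
  assumes lm: "lmodule R X"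
begin

lemma lmod_zero_closed[simp]: "mzero X \<in> mcarrier X"
  using lm unfolding lmodule_def by auto

lemma lmod_add_closed[simp]: "x \<in> mcarrier X \<Longrightarrow> y \<in> mcarrier X \<Longrightarrow> madd X x y \<in> mcarrier X"
  using lm unfolding lmodule_def by auto

lemma lmod_act_closed[simp]: "x \<in> mcarrier X \<Longrightarrow> act X a x \<in> mcarrier X"
  using lm unfolding lmodule_def by auto

lemma lmod_add_assoc:
  "x \<in> mcarrier X \<Longrightarrow> y \<in> mcarrier X \<Longrightarrow> z \<in> mcarrier X \<Longrightarrow>
   madd X (madd X x y) z = madd X x (madd X y z)"
  using lm unfolding lmodule_def by auto

lemma lmod_add_commute: "x \<in> mcarrier X \<Longrightarrow> y \<in> mcarrier X \<Longrightarrow> madd X x y = madd X y x"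
  using lm unfolding lmodule_def by auto

lemma lmod_add_zero_right[simp]: "x \<in> mcarrier X \<Longrightarrow> madd X x (mzero X) = x"
  using lm unfolding lmodule_def by auto

lemma lmod_add_zero_left[simp]: "x \<in> mcarrier X \<Longrightarrow> madd X (mzero X) x = x"
  using lmod_add_zero_right lmod_add_commute lmod_zero_closed by metis

lemma lmod_add_neg_right[simp]: "x \<in> mcarrier X \<Longrightarrow> madd X x (mneg R X x) = mzero X"
  using lm unfolding lmodule_def mneg_def by auto

lemma lmod_neg_closed[simp]: "x \<in> mcarrier X \<Longrightarrow> mneg R X x \<in> mcarrier X"
  unfolding mneg_def by simp

lemma lmod_act_add_left: "x \<in> mcarrier X \<Longrightarrow> act X (vadd R a b) x = madd X (act X a x) (act X b x)"
  using lm unfolding lmodule_def by auto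

lemma lmod_act_add_right:
  "x \<in> mcarrier X \<Longrightarrow> y \<in> mcarrier X \<Longrightarrow> act X a (madd X x y) = madd X (act X a x) (act X a y)"
  using lm unfolding lmodule_def by auto

lemma lmod_act_mult: "x \<in> mcarrier X \<Longrightarrow> act X (amult R a b) x = act X a (act X b x)"
  using lm unfolding lmodule_def by auto

lemma lmod_act_one[simp]: "x \<in> mcarrier X \<Longrightarrow> act X (aone R) x = x"
  using lm unfolding lmodule_def by auto

lemma lmod_add_right_cancel:
  assumes "x \<in> mcarrier X" "y \<in> mcarrier X" "z \<in> mcarrier X" "madd X x z = madd X y z"
  shows "x = y"
proof -
  have "x = madd X x (madd X z (mneg R X z))" using assms(1,3) by simp
  also have "\<dots> = madd X (madd X x z) (mneg R X z)" using assms(1,3) lmod_add_assoc by simp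
  also have "\<dots> = madd X (madd X y z) (mneg R X z)" by (simp only: assms(4))
  also have "\<dots> = madd X y (madd X z (mneg R X z))" using assms(2,3) lmod_add_assoc by simp
  also have "\<dots> = y" using assms(2,3) by simp
  finally show ?thesis .
qed

lemma lmod_add_idem_eq_zero: "x \<in> mcarrier X \<Longrightarrow> madd X x x = x \<Longrightarrow> x = mzero X"
  using lmod_add_right_cancel[of x "mzero X" x] by simp

lemma lmod_neg_add:
  "x \<in> mcarrier X \<Longrightarrow> y \<in> mcarrier X \<Longrightarrow> mneg R X (madd X x y) = madd X (mneg R X x) (mneg R X y)"
  unfolding mneg_def by (simp add: lmod_act_add_right)

lemma lmod_act_zero[simp]: "act X a (mzero X) = mzero X"
proof -
  have "madd X (act X a (mzero X)) (act X a (mzero X)) = act X a (mzero X)"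
    using lmod_act_add_right[of "mzero X" "mzero X" a] by simp
  then show ?thesis by (simp add: lmod_add_idem_eq_zero)
qed

lemma lmod_add_swap:
  assumes "x \<in> mcarrier X" "u \<in> mcarrier X" "y \<in> mcarrier X" "v \<in> mcarrier X"
  shows "madd X (madd X x u) (madd X y v) = madd X (madd X x y) (madd X u v)"
proof -
  have "madd X u (madd X y v) = madd X y (madd X u v)"
    using assms lmod_add_assoc[of u y v] lmod_add_assoc[of y u v] lmod_add_commute[of u y] by simp
  then show ?thesis
    using assms lmod_add_assoc[of x u "madd X y v"] lmod_add_assoc[of x y "madd X u v"] by simp
qed

end

context
  fixes R :: "('k::field, 'a, 'z) kalg_scheme"
  assumes kR: "k_algebra R"
begin

lemma kalg_vector_space: "vector_space R"
  using kR unfolding k_algebra_def by auto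

lemma kalg_add_assoc: "vadd R (vadd R x y) z = vadd R x (vadd R y z)"
  using kalg_vector_space unfolding vector_space_def by auto

lemma kalg_add_commute: "vadd R x y = vadd R y x"
  using kalg_vector_space unfolding vector_space_def by auto

lemma kalg_add_zero_right[simp]: "vadd R x (vzero R) = x"
  using kalg_vector_space unfolding vector_space_def by auto

lemma kalg_add_zero_left[simp]: "vadd R (vzero R) x = x"
  using kalg_add_zero_right kalg_add_commute by metis

lemma kalg_add_neg_right: "vadd R x (vsmult R (-1) x) = vzero R"
  using kalg_vector_space unfolding vector_space_def by auto

lemma kalg_add_diff_cancel: "vadd R a (vadd R b (vsmult R (-1) a)) = b"
  by (metis kalg_add_assoc kalg_add_commute kalg_add_neg_right kalg_add_zero_right)

lemma kalg_smult_zero[simp]: "vsmult R 0 x = vzero R"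
proof -
  have "vadd R (vsmult R 0 x) (vsmult R 0 x) = vsmult R 0 x"
    using kalg_vector_space unfolding vector_space_def by (metis add_0)
  then have "vadd R (vadd R (vsmult R 0 x) (vsmult R 0 x)) (vsmult R (-1) (vsmult R 0 x)) = vzero R"
    by (simp add: kalg_add_neg_right)
  then show ?thesis by (simp add: kalg_add_assoc kalg_add_neg_right)
qed

lemma kalg_mult_assoc: "amult R (amult R x y) z = amult R x (amult R y z)"
  using kR unfolding k_algebra_def by auto

lemma kalg_mult_one_left[simp]: "amult R (aone R) x = x"
  using kR unfolding k_algebra_def by auto

lemma kalg_mult_one_right[simp]: "amult R x (aone R) = x"
  using kR unfolding k_algebra_def by auto

lemma kalg_distrib_left: "amult R x (vadd R y z) = vadd R (amult R x y) (amult R x z)"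
  using kR unfolding k_algebra_def by auto

lemma kalg_distrib_right: "amult R (vadd R x y) z = vadd R (amult R x z) (amult R y z)"
  using kR unfolding k_algebra_def by auto

lemma kalg_smult_mult_left: "amult R (vsmult R c x) y = vsmult R c (amult R x y)"
  using kR unfolding k_algebra_def by auto

lemma kalg_smult_mult_right: "amult R x (vsmult R c y) = vsmult R c (amult R x y)"
  using kR unfolding k_algebra_def by auto

lemma kalg_mult_zero_right[simp]: "amult R x (vzero R) = vzero R"
  using kalg_smult_mult_right[of x 0 "vzero R"] by simp

lemma lmod_act_vzero[simp]:
  assumes lm: "lmodule R X" and x: "x \<in> mcarrier X"
  shows "act X (vzero R) x = mzero X"
proof -
  have "madd X (act X (vzero R) x) (act X (vzero R) x) = act X (vzero R) x"
    using lmod_act_add_left[OF lm x, of "vzero R" "vzero R"] by simp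
  then show ?thesis using lmod_add_idem_eq_zero[OF lm] lmod_act_closed[OF lm x] by blast
qed

lemma lmod_neg_act:
  assumes lm: "lmodule R X" and x: "x \<in> mcarrier X"
  shows "mneg R X (act X a x) = act X a (mneg R X x)"
proof -
  have "amult R (vsmult R (-1) (aone R)) a = amult R a (vsmult R (-1) (aone R))"
    by (simp add: kalg_smult_mult_left kalg_smult_mult_right)
  then show ?thesis unfolding mneg_def using lmod_act_mult[OF lm x] by metis
qed

end

lemma mod_hom_closed: "mod_hom X Y f \<Longrightarrow> x \<in> mcarrier X \<Longrightarrow> f x \<in> mcarrier Y"
  unfolding mod_hom_def by auto

lemma mod_hom_add:
  "mod_hom X Y f \<Longrightarrow> x \<in> mcarrier X \<Longrightarrow> y \<in> mcarrier X \<Longrightarrow> f (madd X x y) = madd Y (f x) (f y)"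
  unfolding mod_hom_def by auto

lemma mod_hom_act: "mod_hom X Y f \<Longrightarrow> x \<in> mcarrier X \<Longrightarrow> f (act X a x) = act Y a (f x)"
  unfolding mod_hom_def by auto

lemma mod_hom_neg: "mod_hom X Y f \<Longrightarrow> x \<in> mcarrier X \<Longrightarrow> f (mneg R X x) = mneg R Y (f x)"
  unfolding mod_hom_def mneg_def by auto

lemma mod_hom_comp: "mod_hom X Y f \<Longrightarrow> mod_hom Y Z g \<Longrightarrow> mod_hom X Z (g \<circ> f)"
  unfolding mod_hom_def by (auto simp: image_subset_iff)

lemma mod_hom_zero:
  assumes "lmodule R X" "lmodule R Y" "mod_hom X Y f"
  shows "f (mzero X) = mzero Y"
proof -
  have "madd Y (f (mzero X)) (f (mzero X)) = f (mzero X)"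
    using mod_hom_add[OF assms(3), of "mzero X" "mzero X"] assms(1) by simp
  then show ?thesis
    using lmod_add_idem_eq_zero[OF assms(2)]
      mod_hom_closed[OF assms(3) lmod_zero_closed[OF assms(1)]] by blast
qed

lemma msum_Nil[simp]: "msum X [] = mzero X"
  unfolding msum_def by simp

lemma msum_Cons[simp]: "msum X (x # xs) = madd X x (msum X xs)"
  unfolding msum_def by simp

lemma msum_closed: "lmodule R X \<Longrightarrow> set xs \<subseteq> mcarrier X \<Longrightarrow> msum X xs \<in> mcarrier X"
  by (induction xs) auto

lemma msum_append:
  "lmodule R X \<Longrightarrow> set xs \<subseteq> mcarrier X \<Longrightarrow> set ys \<subseteq> mcarrier X \<Longrightarrow>
   msum X (xs @ ys) = madd X (msum X xs) (msum X ys)"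
  by (induction xs) (auto simp: msum_closed lmod_add_assoc)

lemma act_msum:
  "lmodule R X \<Longrightarrow> set xs \<subseteq> mcarrier X \<Longrightarrow> act X a (msum X xs) = msum X (map (act X a) xs)"
  by (induction xs) (auto simp: msum_closed lmod_act_add_right)

lemma msum_zeros: "lmodule R X \<Longrightarrow> \<forall>x\<in>set xs. x = mzero X \<Longrightarrow> msum X xs = mzero X"
  by (induction xs) auto

lemma mod_hom_msum:
  assumes "lmodule R X" "lmodule R Y" "mod_hom X Y f"
  shows "set xs \<subseteq> mcarrier X \<Longrightarrow> f (msum X xs) = msum Y (map f xs)"
  by (induction xs)
    (auto simp: mod_hom_zero[OF assms] mod_hom_add[OF assms(3)] msum_closed[OF assms(1)])

definition add_monoid :: "('a, 'm) lmod \<Rightarrow> 'm monoid" where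
  "add_monoid X = \<lparr>carrier = mcarrier X, mult = madd X, one = mzero X\<rparr>"

definition msum_set :: "('a, 'm) lmod \<Rightarrow> ('x \<Rightarrow> 'm) \<Rightarrow> 'x set \<Rightarrow> 'm" where
  "msum_set X f S = finprod (add_monoid X) f S"

lemma add_monoid_simps[simp]:
  "carrier (add_monoid X) = mcarrier X" "mult (add_monoid X) = madd X"
  "one (add_monoid X) = mzero X"
  by (simp_all add: add_monoid_def)

lemma comm_monoid_add_monoid: "lmodule R X \<Longrightarrow> comm_monoid (add_monoid X)"
  unfolding comm_monoid_def monoid_def comm_monoid_axioms_def add_monoid_def lmodule_def
  by auto

context
  fixes R :: "('k::field, 'a, 'z) kalg_scheme" and X :: "('a, 'm) lmod"
  assumes lm: "lmodule R X"
begin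

interpretation add: comm_monoid "add_monoid X"
  by (rule comm_monoid_add_monoid[OF lm])

lemma msum_set_closed: "(\<And>x. x \<in> S \<Longrightarrow> f x \<in> mcarrier X) \<Longrightarrow> msum_set X f S \<in> mcarrier X"
  unfolding msum_set_def using add.finprod_closed[of f S] by (auto simp: Pi_def)

lemma msum_set_empty[simp]: "msum_set X f {} = mzero X"
  unfolding msum_set_def by simp

lemma msum_set_insert:
  "finite S \<Longrightarrow> x \<notin> S \<Longrightarrow> (\<And>y. y \<in> insert x S \<Longrightarrow> f y \<in> mcarrier X) \<Longrightarrow>
   msum_set X f (insert x S) = madd X (f x) (msum_set X f S)"
  unfolding msum_set_def by (subst add.finprod_insert) auto

lemma msum_set_singleton: "f x \<in> mcarrier X \<Longrightarrow> msum_set X f {x} = f x"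
  using msum_set_insert[of "{}" x f] lm by simp

lemma msum_set_add:
  "(\<And>x. x \<in> S \<Longrightarrow> f x \<in> mcarrier X) \<Longrightarrow> (\<And>x. x \<in> S \<Longrightarrow> g x \<in> mcarrier X) \<Longrightarrow>
   msum_set X (\<lambda>x. madd X (f x) (g x)) S = madd X (msum_set X f S) (msum_set X g S)"
  unfolding msum_set_def using add.finprod_multf[of f S g] by auto

lemma msum_set_cong:
  "(\<And>x. x \<in> S \<Longrightarrow> f x = g x) \<Longrightarrow> (\<And>x. x \<in> S \<Longrightarrow> g x \<in> mcarrier X) \<Longrightarrow>
   msum_set X f S = msum_set X g S"
  unfolding msum_set_def by (intro add.finprod_cong) (auto simp: simp_implies_def)

lemma msum_set_mono_neutral:
  "finite T \<Longrightarrow> S \<subseteq> T \<Longrightarrow> (\<And>x. x \<in> T - S \<Longrightarrow> f x = mzero X) \<Longrightarrow>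
   (\<And>x. x \<in> T \<Longrightarrow> f x \<in> mcarrier X) \<Longrightarrow> msum_set X f T = msum_set X f S"
  unfolding msum_set_def by (rule add.finprod_mono_neutral_cong_left[symmetric]) auto

lemma act_msum_set:
  "finite S \<Longrightarrow> (\<And>x. x \<in> S \<Longrightarrow> f x \<in> mcarrier X) \<Longrightarrow>
   act X a (msum_set X f S) = msum_set X (\<lambda>x. act X a (f x)) S"
proof (induction S rule: finite_induct)
  case (insert y S)
  then have f: "\<And>x. x \<in> insert y S \<Longrightarrow> f x \<in> mcarrier X" by simp
  have "act X a (msum_set X f (insert y S)) = madd X (act X a (f y)) (act X a (msum_set X f S))"
    using msum_set_insert[OF insert(1,2) f] f msum_set_closed[of S f]
    by (simp add: lmod_act_add_right[OF lm])
  also have "\<dots> = msum_set X (\<lambda>x. act X a (f x)) (insert y S)"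
    using msum_set_insert[OF insert(1,2), of "\<lambda>x. act X a (f x)"] insert(3) f lm by simp
  finally show ?case .
qed (use lm in simp)

end

section \<open>Free modules and projective lifting\<close>

definition supp :: "('k::field, 'a, 'z) kalg_scheme \<Rightarrow> ('x \<Rightarrow> 'a) \<Rightarrow> 'x set" where
  "supp R f = {x. f x \<noteq> vzero R}"

definition free_basis :: "('k::field, 'a, 'z) kalg_scheme \<Rightarrow> 'x \<Rightarrow> 'x \<Rightarrow> 'a" where
  "free_basis R x = (\<lambda>y. if y = x then aone R else vzero R)"

lemma free_mod_simps:
  "mcarrier (free_mod R S) = {f. finite (supp R f) \<and> supp R f \<subseteq> S}"
  "madd (free_mod R S) f g = (\<lambda>x. vadd R (f x) (g x))"
  "mzero (free_mod R S) = (\<lambda>x. vzero R)"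
  "act (free_mod R S) a f = (\<lambda>x. amult R a (f x))"
  unfolding free_mod_def supp_def by simp_all

lemma free_basis_closed: "x \<in> S \<Longrightarrow> free_basis R x \<in> mcarrier (free_mod R S)"
proof -
  assume "x \<in> S"
  moreover have "supp R (free_basis R x) \<subseteq> {x}"
    unfolding supp_def free_basis_def by auto
  ultimately show ?thesis
    unfolding free_mod_simps by (auto intro: finite_subset)
qed

lemma lmodule_free_mod:
  assumes kR: "k_algebra R"
  shows "lmodule R (free_mod R S)"
proof -
  let ?F = "free_mod R S"
  have add: "madd ?F f g \<in> mcarrier ?F" if "f \<in> mcarrier ?F" "g \<in> mcarrier ?F" for f g
  proof -
    have "supp R (madd ?F f g) \<subseteq> supp R f \<union> supp R g"
      unfolding supp_def free_mod_simps using kalg_add_zero_right[OF kR] by auto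
    then show ?thesis using that unfolding free_mod_simps by (auto intro: finite_subset)
  qed
  have act: "act ?F a f \<in> mcarrier ?F" if "f \<in> mcarrier ?F" for a f
  proof -
    have "supp R (act ?F a f) \<subseteq> supp R f"
      unfolding supp_def free_mod_simps using kalg_mult_zero_right[OF kR] by auto
    then show ?thesis using that unfolding free_mod_simps by (auto intro: finite_subset)
  qed
  have zero: "mzero ?F \<in> mcarrier ?F"
    unfolding free_mod_simps supp_def by simp
  have neg: "vadd R y (amult R (vsmult R (-1) (aone R)) y) = vzero R" for y
    using kalg_add_neg_right[OF kR] by (simp add: kalg_smult_mult_left[OF kR] kR)
  show ?thesis
    unfolding lmodule_def using add act zero
    by (simp add: free_mod_simps neg kR kalg_add_assoc kalg_add_commute[OF kR, of _ "vzero R"]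
        kalg_distrib_left kalg_distrib_right kalg_mult_assoc)
      (simp add: kalg_add_commute[OF kR])
qed

lemma free_mod_decompose:
  assumes "k_algebra R"
  shows "f = madd (free_mod R S) (f(x := vzero R)) (act (free_mod R S) (f x) (free_basis R x))"
  unfolding free_mod_simps free_basis_def using assms by auto

lemma free_mod_hom_ext:
  assumes kR: "k_algebra R" and lY: "lmodule R Y"
    and g1: "mod_hom (free_mod R S) Y g1" and g2: "mod_hom (free_mod R S) Y g2"
    and basis: "\<And>x. x \<in> S \<Longrightarrow> g1 (free_basis R x) = g2 (free_basis R x)"
    and f: "f \<in> mcarrier (free_mod R S)"
  shows "g1 f = g2 f"
proof -
  let ?F = "free_mod R S"
  have lF: "lmodule R ?F" by (rule lmodule_free_mod[OF kR])
  have "\<forall>f\<in>mcarrier ?F. supp R f \<subseteq> T \<longrightarrow> g1 f = g2 f" if "finite T" "T \<subseteq> S" for T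
    using that
  proof (induction T rule: finite_induct)
    case empty
    have "f = mzero ?F" if "supp R f \<subseteq> {}" for f
      using that unfolding supp_def free_mod_simps by auto
    then show ?case
      using mod_hom_zero[OF lF lY g1] mod_hom_zero[OF lF lY g2] by auto
  next
    case (insert x T)
    show ?case
    proof (intro ballI impI)
      fix f assume f: "f \<in> mcarrier ?F" and fT: "supp R f \<subseteq> insert x T"
      let ?f' = "f(x := vzero R)" and ?b = "act ?F (f x) (free_basis R x)"
      have x: "x \<in> S" using insert.prems by simp
      have f': "?f' \<in> mcarrier ?F" "supp R ?f' \<subseteq> T"
        using f fT unfolding free_mod_simps supp_def by (auto intro: finite_subset)
      have b: "?b \<in> mcarrier ?F" using lmod_act_closed[OF lF free_basis_closed[OF x]] .
      have "g1 f = madd Y (g1 ?f') (act Y (f x) (g1 (free_basis R x)))"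
        using free_mod_decompose[OF kR, of f S x] mod_hom_add[OF g1 f'(1) b]
          mod_hom_act[OF g1 free_basis_closed[OF x]] by simp
      also have "\<dots> = madd Y (g2 ?f') (act Y (f x) (g2 (free_basis R x)))"
        using insert.IH insert.prems f' basis[OF x] by simp
      also have "\<dots> = g2 f"
        using free_mod_decompose[OF kR, of f S x] mod_hom_add[OF g2 f'(1) b]
          mod_hom_act[OF g2 free_basis_closed[OF x]] by simp
      finally show "g1 f = g2 f" .
    qed
  qed
  then show ?thesis using f unfolding free_mod_simps by blast
qed

definition free_extension ::
  "('k::field, 'a, 'z) kalg_scheme \<Rightarrow> ('a, 'm) lmod \<Rightarrow> ('x \<Rightarrow> 'm) \<Rightarrow> ('x \<Rightarrow> 'a) \<Rightarrow> 'm" where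
  "free_extension R X c f = msum_set X (\<lambda>x. act X (f x) (c x)) (supp R f)"

context
  fixes R :: "('k::field, 'a, 'z) kalg_scheme" and X :: "('a, 'm) lmod" and S :: "'x set"
    and c :: "'x \<Rightarrow> 'm"
  assumes kR: "k_algebra R" and lX: "lmodule R X" and c: "\<And>x. x \<in> S \<Longrightarrow> c x \<in> mcarrier X"
begin

private lemma terms_closed: "x \<in> S \<Longrightarrow> act X a (c x) \<in> mcarrier X"
  using lX c by simp

lemma free_extension_superset:
  assumes "finite T" "supp R f \<subseteq> T" "T \<subseteq> S"
  shows "free_extension R X c f = msum_set X (\<lambda>x. act X (f x) (c x)) T"
  unfolding free_extension_def using assms
  by (intro msum_set_mono_neutral[OF lX, symmetric])
    (auto simp: supp_def lmod_act_vzero[OF kR lX c] terms_closed)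

lemma free_extension_closed: "f \<in> mcarrier (free_mod R S) \<Longrightarrow> free_extension R X c f \<in> mcarrier X"
  unfolding free_extension_def
  by (intro msum_set_closed[OF lX]) (auto simp: free_mod_simps terms_closed)

lemma free_extension_add:
  assumes f: "f \<in> mcarrier (free_mod R S)" and g: "g \<in> mcarrier (free_mod R S)"
  shows "free_extension R X c (madd (free_mod R S) f g) =
         madd X (free_extension R X c f) (free_extension R X c g)"
proof -
  let ?T = "supp R f \<union> supp R g"
  have T: "finite ?T" "?T \<subseteq> S" using f g unfolding free_mod_simps by auto
  have "supp R (madd (free_mod R S) f g) \<subseteq> ?T"
    unfolding supp_def free_mod_simps using kalg_add_zero_right[OF kR] by auto
  then have "free_extension R X c (madd (free_mod R S) f g) =
             msum_set X (\<lambda>x. act X (madd (free_mod R S) f g x) (c x)) ?T"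
    using free_extension_superset T by blast
  also have "\<dots> = msum_set X (\<lambda>x. madd X (act X (f x) (c x)) (act X (g x) (c x))) ?T"
    using T(2) lX c terms_closed
    by (intro msum_set_cong[OF lX]) (auto simp: free_mod_simps lmod_act_add_left subset_iff)
  also have "\<dots> = madd X (free_extension R X c f) (free_extension R X c g)"
    using T(2) terms_closed free_extension_superset[OF T(1) _ T(2)]
    by (subst msum_set_add[OF lX]) auto
  finally show ?thesis .
qed

lemma free_extension_act:
  assumes f: "f \<in> mcarrier (free_mod R S)"
  shows "free_extension R X c (act (free_mod R S) a f) = act X a (free_extension R X c f)"
proof -
  let ?T = "supp R f"
  have T: "finite ?T" "?T \<subseteq> S" using f unfolding free_mod_simps by auto
  have "supp R (act (free_mod R S) a f) \<subseteq> ?T"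
    unfolding supp_def free_mod_simps using kalg_mult_zero_right[OF kR] by auto
  then have "free_extension R X c (act (free_mod R S) a f) =
             msum_set X (\<lambda>x. act X a (act X (f x) (c x))) ?T"
    using free_extension_superset[OF T(1) _ T(2)] T(2) lX c terms_closed
    by (auto simp: free_mod_simps lmod_act_mult subset_iff intro!: msum_set_cong[OF lX])
  also have "\<dots> = act X a (free_extension R X c f)"
    unfolding free_extension_def using T terms_closed by (intro act_msum_set[OF lX, symmetric]) auto
  finally show ?thesis .
qed

lemma free_extension_basis:
  assumes x: "x \<in> S"
  shows "free_extension R X c (free_basis R x) = c x"
proof -
  have "supp R (free_basis R x) \<subseteq> {x}"
    unfolding supp_def free_basis_def by auto
  then have "free_extension R X c (free_basis R x) =
             msum_set X (\<lambda>y. act X (free_basis R x y) (c y)) {x}"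
    using free_extension_superset x by blast
  also have "\<dots> = c x"
    using x c lX terms_closed by (subst msum_set_singleton[OF lX]) (auto simp: free_basis_def)
  finally show ?thesis .
qed

lemma mod_hom_free_extension: "mod_hom (free_mod R S) X (free_extension R X c)"
  unfolding mod_hom_def using free_extension_closed free_extension_add free_extension_act by auto

end

lemma projective_lifting:
  assumes kR: "k_algebra R" and pQ: "projective R Q" and lX: "lmodule R X" and lY: "lmodule R Y"
    and f: "mod_hom X Y f" and g: "mod_hom Q Y g" and img: "g ` mcarrier Q \<subseteq> f ` mcarrier X"
  shows "\<exists>h. mod_hom Q X h \<and> (\<forall>q\<in>mcarrier Q. f (h q) = g q)"
proof -
  let ?F = "free_mod R (mcarrier Q)"
  obtain s r where s: "mod_hom Q ?F s" and r: "mod_hom ?F Q r" and rs: "\<forall>q\<in>mcarrier Q. r (s q) = q"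
    using pQ unfolding projective_def by blast
  have "\<forall>x\<in>mcarrier Q. \<exists>y\<in>mcarrier X. f y = g (r (free_basis R x))"
    using img mod_hom_closed[OF r free_basis_closed] by (metis imageE image_subset_iff)
  then obtain c where c: "\<And>x. x \<in> mcarrier Q \<Longrightarrow> c x \<in> mcarrier X \<and> f (c x) = g (r (free_basis R x))"
    by metis
  have cX: "\<And>x. x \<in> mcarrier Q \<Longrightarrow> c x \<in> mcarrier X" using c by blast
  let ?\<Phi> = "free_extension R X c"
  note \<Phi> = mod_hom_free_extension[OF kR lX, of "mcarrier Q" c, OF cX]
    and \<Phi>_basis = free_extension_basis[OF kR lX, of "mcarrier Q" c, OF cX]
  have lifts: "f (?\<Phi> v) = g (r v)" if "v \<in> mcarrier ?F" for v
    using free_mod_hom_ext[OF kR lY mod_hom_comp[OF \<Phi> f] mod_hom_comp[OF r g] _ that] \<Phi>_basis c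
    by simp
  have "mod_hom Q X (?\<Phi> \<circ> s)" by (rule mod_hom_comp[OF s \<Phi>])
  moreover have "\<forall>q\<in>mcarrier Q. f ((?\<Phi> \<circ> s) q) = g q"
    using lifts mod_hom_closed[OF s] rs by simp
  ultimately show ?thesis by blast
qed

section \<open>Restriction of scalars and images of modules\<close>

definition restrict_scalars :: "('a \<Rightarrow> 'h) \<Rightarrow> ('h, 'm) lmod \<Rightarrow> ('a, 'm) lmod" where
  "restrict_scalars p Z =
     \<lparr>mcarrier = mcarrier Z, madd = madd Z, mzero = mzero Z, act = (\<lambda>a. act Z (p a))\<rparr>"

lemma restrict_scalars_simps[simp]:
  "mcarrier (restrict_scalars p Z) = mcarrier Z" "madd (restrict_scalars p Z) = madd Z"
  "mzero (restrict_scalars p Z) = mzero Z" "act (restrict_scalars p Z) a = act Z (p a)"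
  by (simp_all add: restrict_scalars_def)

lemma lmodule_restrict_scalars_iff:
  fixes A :: "('k::field, 'a, 'z) kalg_scheme" and H :: "('k, 'h, 'w) kalg_scheme"
  assumes surj: "surj p"
    and add: "\<And>a b. p (vadd A a b) = vadd H (p a) (p b)"
    and mult: "\<And>a b. p (amult A a b) = amult H (p a) (p b)"
    and one: "p (aone A) = aone H"
    and smult: "\<And>c a. p (vsmult A c a) = vsmult H c (p a)"
  shows "lmodule A (restrict_scalars p Z) \<longleftrightarrow> lmodule H Z"
proof -
  have all: "(\<forall>h. Q h) \<longleftrightarrow> (\<forall>a. Q (p a))" for Q :: "'h \<Rightarrow> bool"
    using surj by (metis surj_f_inv_f)
  have all2: "(\<forall>h g. Q h g) \<longleftrightarrow> (\<forall>a b. Q (p a) (p b))" for Q :: "'h \<Rightarrow> 'h \<Rightarrow> bool"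
    using surj by (metis surj_f_inv_f)
  show ?thesis
    unfolding lmodule_def restrict_scalars_simps
      all[where Q = "\<lambda>h. \<forall>x\<in>mcarrier Z. act Z h x \<in> mcarrier Z"]
      all[where Q = "\<lambda>h. \<forall>x\<in>mcarrier Z. \<forall>y\<in>mcarrier Z.
                       act Z h (madd Z x y) = madd Z (act Z h x) (act Z h y)"]
      all2[where Q = "\<lambda>h g. \<forall>x\<in>mcarrier Z. act Z (vadd H h g) x = madd Z (act Z h x) (act Z g x)"]
      all2[where Q = "\<lambda>h g. \<forall>x\<in>mcarrier Z. act Z (amult H h g) x = act Z h (act Z g x)"]
    by (simp add: add mult one smult)
qed

lemma lmodule_image:
  assumes lM: "lmodule R M" and car: "mcarrier N = \<pi> ` mcarrier M"
    and add: "\<And>x y. x \<in> mcarrier M \<Longrightarrow> y \<in> mcarrier M \<Longrightarrow> madd N (\<pi> x) (\<pi> y) = \<pi> (madd M x y)"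
    and zero: "mzero N = \<pi> (mzero M)"
    and act: "\<And>a x. x \<in> mcarrier M \<Longrightarrow> act N a (\<pi> x) = \<pi> (act M a x)"
  shows "lmodule R N"
proof -
  have all: "(\<forall>y\<in>mcarrier N. Q y) \<longleftrightarrow> (\<forall>x\<in>mcarrier M. Q (\<pi> x))" for Q
    using car by simp
  note [simp] = lmod_zero_closed[OF lM] lmod_add_closed[OF lM] lmod_act_closed[OF lM] add act car
  have "\<forall>x\<in>mcarrier M. \<forall>y\<in>mcarrier M. \<forall>z\<in>mcarrier M.
     madd N (madd N (\<pi> x) (\<pi> y)) (\<pi> z) = madd N (\<pi> x) (madd N (\<pi> y) (\<pi> z))"
    by (simp add: lmod_add_assoc[OF lM])
  moreover have "\<forall>x\<in>mcarrier M. \<forall>y\<in>mcarrier M. madd N (\<pi> x) (\<pi> y) = madd N (\<pi> y) (\<pi> x)"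
    by (simp add: lmod_add_commute[OF lM])
  moreover have "\<forall>x\<in>mcarrier M. madd N (\<pi> x) (\<pi> (mzero M)) = \<pi> x"
    by (simp add: lmod_add_zero_right[OF lM])
  moreover have "\<forall>x\<in>mcarrier M. madd N (\<pi> x) (act N (vsmult R (-1) (aone R)) (\<pi> x)) = \<pi> (mzero M)"
    using lmod_add_neg_right[OF lM] by (simp add: mneg_def)
  moreover have "\<forall>a b. \<forall>x\<in>mcarrier M.
      act N (vadd R a b) (\<pi> x) = madd N (act N a (\<pi> x)) (act N b (\<pi> x))"
    by (simp add: lmod_act_add_left[OF lM])
  moreover have "\<forall>a. \<forall>x\<in>mcarrier M. \<forall>y\<in>mcarrier M.
      act N a (madd N (\<pi> x) (\<pi> y)) = madd N (act N a (\<pi> x)) (act N a (\<pi> y))"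
    by (simp add: lmod_act_add_right[OF lM])
  moreover have "\<forall>a b. \<forall>x\<in>mcarrier M. act N (amult R a b) (\<pi> x) = act N a (act N b (\<pi> x))"
    by (simp add: lmod_act_mult[OF lM])
  moreover have "\<forall>x\<in>mcarrier M. act N (aone R) (\<pi> x) = \<pi> x"
    by (simp add: lmod_act_one[OF lM])
  ultimately show ?thesis
    unfolding lmodule_def all zero by auto
qed

section \<open>Split resolutions\<close>

lemma mod_hom_id_minus:
  assumes kR: "k_algebra R" and lQ: "lmodule R Q" and \<phi>: "mod_hom Q Q \<phi>"
  shows "mod_hom Q Q (\<lambda>w. madd Q w (mneg R Q (\<phi> w)))"
proof -
  note [simp] = lQ mod_hom_closed[OF \<phi>]
  have "madd Q (madd Q x y) (mneg R Q (\<phi> (madd Q x y))) =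
        madd Q (madd Q x (mneg R Q (\<phi> x))) (madd Q y (mneg R Q (\<phi> y)))"
    if "x \<in> mcarrier Q" "y \<in> mcarrier Q" for x y
    using that lmod_add_swap[OF lQ, of x "mneg R Q (\<phi> x)" y "mneg R Q (\<phi> y)"]
    by (simp add: mod_hom_add[OF \<phi>] lmod_neg_add)
  moreover have
    "madd Q (act Q a x) (mneg R Q (\<phi> (act Q a x))) = act Q a (madd Q x (mneg R Q (\<phi> x)))"
    if "x \<in> mcarrier Q" for x a
    using that lmod_act_add_right[OF lQ that, of "mneg R Q (\<phi> x)" a]
    by (simp add: mod_hom_act[OF \<phi>] lmod_neg_act[OF kR lQ])
  ultimately show ?thesis
    unfolding mod_hom_def by (auto simp: lmod_add_closed[OF lQ] lmod_neg_closed[OF lQ])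
qed

lemma projective_factor_id_minus:
  assumes kR: "k_algebra R" and pQ: "projective R Q" and lX: "lmodule R X"
    and D: "mod_hom X Q D" and \<phi>: "mod_hom Q Q \<phi>"
    and img: "\<And>w. w \<in> mcarrier Q \<Longrightarrow> madd Q w (mneg R Q (\<phi> w)) \<in> D ` mcarrier X"
  shows "\<exists>\<sigma>. mod_hom Q X \<sigma> \<and> (\<forall>w\<in>mcarrier Q. madd Q (D (\<sigma> w)) (\<phi> w) = w)"
proof -
  have lQ: "lmodule R Q" using pQ unfolding projective_def by auto
  obtain \<sigma> where \<sigma>: "mod_hom Q X \<sigma>"
    and D\<sigma>: "\<forall>w\<in>mcarrier Q. D (\<sigma> w) = madd Q w (mneg R Q (\<phi> w))"
    using projective_lifting[OF kR pQ lX lQ D mod_hom_id_minus[OF kR lQ \<phi>]] img by blast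
  have "madd Q (D (\<sigma> w)) (\<phi> w) = w" if w: "w \<in> mcarrier Q" for w
  proof -
    have \<phi>w: "\<phi> w \<in> mcarrier Q" using mod_hom_closed[OF \<phi> w] .
    have "madd Q (D (\<sigma> w)) (\<phi> w) = madd Q w (madd Q (mneg R Q (\<phi> w)) (\<phi> w))"
      using D\<sigma> w \<phi>w lQ by (simp add: lmod_add_assoc)
    also have "\<dots> = w"
      using w \<phi>w lQ by (simp add: lmod_add_commute[OF lQ, of "mneg R Q (\<phi> w)"])
    finally show ?thesis .
  qed
  with \<sigma> show ?thesis by blast
qed

lemma homotopy_extend:
  assumes kR: "k_algebra R" and pQ: "projective R Q" and lX: "lmodule R X" and lZ: "lmodule R Z"
    and D: "mod_hom X Q D" and \<delta>: "mod_hom Q Z \<delta>" and \<tau>: "mod_hom Z Q \<tau>"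
    and exact: "{w \<in> mcarrier Q. \<delta> w = mzero Z} \<subseteq> D ` mcarrier X"
    and splits: "\<And>z. z \<in> \<delta> ` mcarrier Q \<Longrightarrow> \<delta> (\<tau> z) = z"
  shows "\<exists>\<sigma>. mod_hom Q X \<sigma> \<and> (\<forall>w\<in>mcarrier Q. madd Q (D (\<sigma> w)) (\<tau> (\<delta> w)) = w)"
proof -
  have lQ: "lmodule R Q" using pQ unfolding projective_def by auto
  have "madd Q w (mneg R Q ((\<tau> \<circ> \<delta>) w)) \<in> D ` mcarrier X" if w: "w \<in> mcarrier Q" for w
  proof -
    have \<tau>\<delta>w: "\<tau> (\<delta> w) \<in> mcarrier Q" using mod_hom_closed[OF \<tau> mod_hom_closed[OF \<delta> w]] .
    have "\<delta> (madd Q w (mneg R Q (\<tau> (\<delta> w)))) = madd Z (\<delta> w) (mneg R Z (\<delta> (\<tau> (\<delta> w))))"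
      using mod_hom_add[OF \<delta> w lmod_neg_closed[OF lQ \<tau>\<delta>w]] mod_hom_neg[OF \<delta> \<tau>\<delta>w, of R] by simp
    also have "\<dots> = mzero Z"
      using splits w mod_hom_closed[OF \<delta> w] lZ by simp
    finally show ?thesis
      using exact w \<tau>\<delta>w lQ by auto
  qed
  then show ?thesis
    using projective_factor_id_minus[OF kR pQ lX D mod_hom_comp[OF \<delta> \<tau>]] by simp
qed

lemma homotopy_section_on_image:
  assumes lQ: "lmodule R Q" and lZ: "lmodule R Z"
    and D: "mod_hom X Q D" and \<sigma>: "mod_hom Q X \<sigma>" and \<tau>: "mod_hom Z Q \<tau>"
    and complex: "\<And>x. x \<in> mcarrier X \<Longrightarrow> \<delta> (D x) = mzero Z"
    and homotopy: "\<forall>w\<in>mcarrier Q. madd Q (D (\<sigma> w)) (\<tau> (\<delta> w)) = w"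
    and z: "z \<in> D ` mcarrier X"
  shows "D (\<sigma> z) = z"
proof -
  obtain x where x: "x \<in> mcarrier X" and zx: "z = D x" using z by blast
  have zQ: "z \<in> mcarrier Q" using mod_hom_closed[OF D x] zx by simp
  have "\<tau> (\<delta> z) = mzero Q" using complex[OF x] zx mod_hom_zero[OF lZ lQ \<tau>] by simp
  then show ?thesis
    using homotopy zQ lQ mod_hom_closed[OF D mod_hom_closed[OF \<sigma> zQ]] by force
qed

lemma proj_resolution_complex:
  assumes "proj_resolution R N P d e"
  shows "w \<in> mcarrier (P (Suc (Suc j))) \<Longrightarrow> d j (d (Suc j) w) = mzero (P j)"
    and "w \<in> mcarrier (P (Suc 0)) \<Longrightarrow> e (d 0 w) = mzero N"
proof -
  have "d (Suc j) w \<in> {x \<in> mcarrier (P (Suc j)). d j x = mzero (P j)}"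
    if "w \<in> mcarrier (P (Suc (Suc j)))"
    using assms that unfolding proj_resolution_def by blast
  then show "w \<in> mcarrier (P (Suc (Suc j))) \<Longrightarrow> d j (d (Suc j) w) = mzero (P j)" by blast
  have "d 0 w \<in> {x \<in> mcarrier (P 0). e x = mzero N}" if "w \<in> mcarrier (P (Suc 0))"
    using assms that unfolding proj_resolution_def One_nat_def by blast
  then show "w \<in> mcarrier (P (Suc 0)) \<Longrightarrow> e (d 0 w) = mzero N" by blast
qed

lemma split_resolution_homotopy:
  assumes kR: "k_algebra R" and res: "proj_resolution R N P d e" and lN: "lmodule R N"
    and s: "mod_hom N (P 0) s" and es: "\<And>y. y \<in> mcarrier N \<Longrightarrow> e (s y) = y"
  shows "\<exists>\<sigma> \<tau>. mod_hom (P (Suc j)) (P (Suc (Suc j))) \<sigma> \<and> mod_hom (P j) (P (Suc j)) \<tau> \<and>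
           (\<forall>w\<in>mcarrier (P (Suc j)). madd (P (Suc j)) (d (Suc j) (\<sigma> w)) (\<tau> (d j w)) = w)"
proof -
  have pP: "\<And>j. projective R (P j)" and dh: "\<And>j. mod_hom (P (Suc j)) (P j) (d j)"
    and eh: "mod_hom (P 0) N e" and esurj: "e ` mcarrier (P 0) = mcarrier N"
    and exact0: "{x \<in> mcarrier (P 0). e x = mzero N} = d 0 ` mcarrier (P (Suc 0))"
    and exact: "\<And>j. {x \<in> mcarrier (P (Suc j)). d j x = mzero (P j)} =
                      d (Suc j) ` mcarrier (P (Suc (Suc j)))"
    using res unfolding proj_resolution_def One_nat_def by auto
  have lP: "\<And>j. lmodule R (P j)" using pP unfolding projective_def by auto
  have sections:
    "\<exists>\<tau>. mod_hom (P j) (P (Suc j)) \<tau> \<and> (\<forall>z\<in>d j ` mcarrier (P (Suc j)). d j (\<tau> z) = z)" for j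
  proof (induction j)
    case 0
    obtain \<sigma> where \<sigma>: "mod_hom (P 0) (P (Suc 0)) \<sigma>"
      and homotopy: "\<forall>w\<in>mcarrier (P 0). madd (P 0) (d 0 (\<sigma> w)) (s (e w)) = w"
      using homotopy_extend[OF kR pP lP lN dh eh s] exact0 es esurj by blast
    have "d 0 (\<sigma> z) = z" if "z \<in> d 0 ` mcarrier (P (Suc 0))" for z
      using homotopy_section_on_image[OF lP lN dh \<sigma> s proj_resolution_complex(2)[OF res]
          homotopy that] .
    with \<sigma> show ?case by blast
  next
    case (Suc j)
    then obtain \<tau> where \<tau>: "mod_hom (P j) (P (Suc j)) \<tau>"
      and splits: "\<forall>z\<in>d j ` mcarrier (P (Suc j)). d j (\<tau> z) = z" by blast
    obtain \<sigma> where \<sigma>: "mod_hom (P (Suc j)) (P (Suc (Suc j))) \<sigma>"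
      and homotopy: "\<forall>w\<in>mcarrier (P (Suc j)). madd (P (Suc j)) (d (Suc j) (\<sigma> w)) (\<tau> (d j w)) = w"
      using homotopy_extend[OF kR pP lP lP dh dh \<tau>] exact splits by blast
    have "d (Suc j) (\<sigma> z) = z" if "z \<in> d (Suc j) ` mcarrier (P (Suc (Suc j)))" for z
      using homotopy_section_on_image[OF lP lP dh \<sigma> \<tau> proj_resolution_complex(1)[OF res]
          homotopy that] .
    with \<sigma> show ?case by blast
  qed
  obtain \<tau> where \<tau>: "mod_hom (P j) (P (Suc j)) \<tau>"
    and splits: "\<forall>z\<in>d j ` mcarrier (P (Suc j)). d j (\<tau> z) = z"
    using sections by blast
  with homotopy_extend[OF kR pP lP lP dh dh \<tau>] exact show ?thesis by blast
qed

lemma mod_hom_aug_mod: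
  assumes lX: "lmodule H X" and lY: "lmodule H Y" and f: "mod_hom X Y f" and u: "u \<in> aug_mod H X"
  shows "f u \<in> aug_mod H Y"
proof -
  obtain l where u: "u = msum X (map (\<lambda>(h, x). act X h x) l)"
    and l: "\<forall>(h, x)\<in>set l. counit H h = 0 \<and> x \<in> mcarrier X"
    using u unfolding aug_mod_def by blast
  let ?l = "map (\<lambda>(h, x). (h, f x)) l"
  have "set (map (\<lambda>(h, x). act X h x) l) \<subseteq> mcarrier X"
    using l lX by auto
  then have "f u = msum Y (map (\<lambda>(h, x). act Y h x) ?l)"
    unfolding u using l mod_hom_act[OF f]
    by (simp add: mod_hom_msum[OF lX lY f] comp_def case_prod_beta cong: map_cong)
  moreover have "\<forall>(h, x)\<in>set ?l. counit H h = 0 \<and> x \<in> mcarrier Y"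
    using l mod_hom_closed[OF f] by auto
  ultimately show ?thesis unfolding aug_mod_def by blast
qed

lemma tor_homology_vanishes_split_resolution:
  fixes H :: "('k::field, 'h, 'z) hopf_scheme"
  assumes kH: "k_algebra H" and res: "proj_resolution H N P d e" and lN: "lmodule H N"
    and s: "mod_hom N (P 0) s" and es: "\<And>y. y \<in> mcarrier N \<Longrightarrow> e (s y) = y" and n: "n \<ge> 1"
  shows "tor_homology_vanishes H P d n"
proof -
  obtain m where m: "n = Suc m" using n by (cases n) auto
  obtain \<sigma> \<tau> where \<sigma>: "mod_hom (P (Suc m)) (P (Suc (Suc m))) \<sigma>" and \<tau>: "mod_hom (P m) (P (Suc m)) \<tau>"
    and homotopy: "\<forall>w\<in>mcarrier (P (Suc m)). madd (P (Suc m)) (d (Suc m) (\<sigma> w)) (\<tau> (d m w)) = w"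
    using split_resolution_homotopy[OF kH res lN s es] by blast
  have lP: "\<And>j. lmodule H (P j)" using res unfolding proj_resolution_def projective_def by auto
  have "\<exists>y u. x = madd (P (Suc m)) (d (Suc m) y) u \<and> y \<in> mcarrier (P (Suc (Suc m))) \<and>
              u \<in> aug_mod H (P (Suc m))"
    if "x \<in> mcarrier (P (Suc m))" "d m x \<in> aug_mod H (P m)" for x
    using that homotopy mod_hom_closed[OF \<sigma>] mod_hom_aug_mod[OF lP lP \<tau>] by metis
  then show ?thesis unfolding tor_homology_vanishes_def m by auto
qed

section \<open>The quotient by the augmentation submodule\<close>

lemma vsum_Nil[simp]: "vsum V [] = vzero V"
  unfolding vsum_def by simp

lemma vsum_Cons[simp]: "vsum V (x # xs) = vadd V x (vsum V xs)"
  unfolding vsum_def by simp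

lemma act_vsum:
  "k_algebra R \<Longrightarrow> lmodule R M \<Longrightarrow> m \<in> mcarrier M \<Longrightarrow>
   act M (vsum R xs) m = msum M (map (\<lambda>a. act M a m) xs)"
  by (induction xs) (auto simp: lmod_act_add_left)

lemma hopf_algebra_k_algebra: "hopf_algebra H \<Longrightarrow> k_algebra H"
  unfolding hopf_algebra_def bialgebra_def by auto

locale exact_sequence_module =
  fixes B :: "('k::field, 'b) hopf" and A :: "('k, 'a) hopf" and H :: "('k, 'h) hopf"
    and i :: "'b \<Rightarrow> 'a" and p :: "'a \<Rightarrow> 'h" and M :: "('a, 'm) lmod"
  assumes exact: "exact_hopf_seq B A H i p" and pM: "projective A M"
begin

lemma kalg_A: "k_algebra A"
  using exact hopf_algebra_k_algebra unfolding exact_hopf_seq_def by auto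

lemma kalg_H: "k_algebra H"
  using exact hopf_algebra_k_algebra unfolding exact_hopf_seq_def by auto

lemma lmodule_M: "lmodule A M"
  using pM unfolding projective_def by auto

lemma p_add: "p (vadd A a b) = vadd H (p a) (p b)"
  and p_smult: "p (vsmult A c a) = vsmult H c (p a)"
  and p_mult: "p (amult A a b) = amult H (p a) (p b)"
  and p_one: "p (aone A) = aone H"
  and surj_p: "surj p"
  using exact unfolding exact_hopf_seq_def hopf_hom_def lin_map_def by auto

lemma ker_p: "{a. p a = vzero H} =
    {vsum A (map (\<lambda>(b, x). amult A (i b) x) l) | l. \<forall>(b, x)\<in>set l. counit B b = 0}"
  using exact unfolding exact_hopf_seq_def by auto

lemma lmodule_restrict_scalars_p_iff: "lmodule A (restrict_scalars p Z) \<longleftrightarrow> lmodule H Z"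
  by (rule lmodule_restrict_scalars_iff[OF surj_p p_add p_mult p_one p_smult])

lemma p_i_aug: "counit B b = 0 \<Longrightarrow> p (i b) = vzero H"
proof -
  assume "counit B b = 0"
  then have "vsum A (map (\<lambda>(b, x). amult A (i b) x) [(b, aone A)]) \<in> {a. p a = vzero H}"
    unfolding ker_p by (intro CollectI exI[of _ "[(b, aone A)]"]) simp
  then show ?thesis using kalg_A by simp
qed

abbreviation "K \<equiv> aug_sub B i M"

lemma aug_terms_closed:
  "\<forall>(b, x)\<in>set l. counit B b = 0 \<and> x \<in> mcarrier M \<Longrightarrow>
   set (map (\<lambda>(b, x). act M (i b) x) l) \<subseteq> mcarrier M"
  using lmod_act_closed[OF lmodule_M] by fastforce

lemma aug_sub_subset: "K \<subseteq> mcarrier M"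
  unfolding aug_sub_def using aug_terms_closed msum_closed[OF lmodule_M] by blast

lemma aug_sub_zero: "mzero M \<in> K"
  unfolding aug_sub_def by (rule CollectI, rule exI[of _ "[]"]) simp

lemma aug_sub_add: "u \<in> K \<Longrightarrow> v \<in> K \<Longrightarrow> madd M u v \<in> K"
proof -
  assume "u \<in> K" "v \<in> K"
  then obtain l1 l2 where u: "u = msum M (map (\<lambda>(b, x). act M (i b) x) l1)"
    and l1: "\<forall>(b, x)\<in>set l1. counit B b = 0 \<and> x \<in> mcarrier M"
    and v: "v = msum M (map (\<lambda>(b, x). act M (i b) x) l2)"
    and l2: "\<forall>(b, x)\<in>set l2. counit B b = 0 \<and> x \<in> mcarrier M"
    unfolding aug_sub_def by blast
  have "madd M u v = msum M (map (\<lambda>(b, x). act M (i b) x) (l1 @ l2))"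
    unfolding u v using msum_append[OF lmodule_M aug_terms_closed[OF l1] aug_terms_closed[OF l2]]
    by simp
  moreover have "\<forall>(b, x)\<in>set (l1 @ l2). counit B b = 0 \<and> x \<in> mcarrier M"
    using l1 l2 by auto
  ultimately show ?thesis unfolding aug_sub_def by blast
qed

lemma msum_in_aug_sub: "set xs \<subseteq> K \<Longrightarrow> msum M xs \<in> K"
  by (induction xs) (auto simp: aug_sub_zero aug_sub_add)

lemma ker_p_act_in_aug_sub:
  assumes a: "p a = vzero H" and m: "m \<in> mcarrier M"
  shows "act M a m \<in> K"
proof -
  obtain l where l: "\<forall>(b, x)\<in>set l. counit B b = 0"
    and "a = vsum A (map (\<lambda>(b, x). amult A (i b) x) l)"
    using a ker_p by blast
  then have "act M a m = msum M (map (\<lambda>(b, x). act M (i b) x) (map (\<lambda>(b, x). (b, act M x m)) l))"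
    using act_vsum[OF kalg_A lmodule_M m] m
    by (simp add: comp_def case_prod_beta lmod_act_mult[OF lmodule_M])
  moreover have "\<forall>(b, x)\<in>set (map (\<lambda>(b, x). (b, act M x m)) l). counit B b = 0 \<and> x \<in> mcarrier M"
    using l m by (auto simp: lmod_act_closed[OF lmodule_M])
  ultimately show ?thesis unfolding aug_sub_def by blast
qed

lemma aug_sub_act: "u \<in> K \<Longrightarrow> act M a u \<in> K"
proof -
  assume "u \<in> K"
  then obtain l where u: "u = msum M (map (\<lambda>(b, x). act M (i b) x) l)"
    and l: "\<forall>(b, x)\<in>set l. counit B b = 0 \<and> x \<in> mcarrier M"
    unfolding aug_sub_def by blast
  have "act M a (act M (i b) x) \<in> K" if bx: "(b, x) \<in> set l" for b x
  proof -
    have b: "counit B b = 0" and x: "x \<in> mcarrier M" using l bx by auto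
    have "p (amult A a (i b)) = vzero H"
      using p_i_aug[OF b] kalg_H by (simp add: p_mult)
    then have "act M (amult A a (i b)) x \<in> K" by (rule ker_p_act_in_aug_sub[OF _ x])
    then show ?thesis using lmod_act_mult[OF lmodule_M x] by simp
  qed
  then have "set (map (act M a) (map (\<lambda>(b, x). act M (i b) x) l)) \<subseteq> K"
    by auto
  then show ?thesis
    unfolding u act_msum[OF lmodule_M aug_terms_closed[OF l]] by (rule msum_in_aug_sub)
qed

abbreviation "\<pi> \<equiv> coset_of M K"

lemma coset_of_add_aug_sub:
  assumes z: "z \<in> mcarrier M" and w: "w \<in> K"
  shows "\<pi> (madd M z w) = \<pi> z"
proof (intro equalityI subsetI)
  have wM: "w \<in> mcarrier M" using w aug_sub_subset by auto
  fix x
  {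
    assume "x \<in> \<pi> (madd M z w)"
    then obtain u where u: "u \<in> K" "x = madd M (madd M z w) u"
      unfolding coset_of_def by blast
    then have "x = madd M z (madd M w u)"
      using lmod_add_assoc[OF lmodule_M] z wM aug_sub_subset by auto
    then show "x \<in> \<pi> z"
      using aug_sub_add[OF w u(1)] unfolding coset_of_def by blast
  next
    assume "x \<in> \<pi> z"
    then obtain u where u: "u \<in> K" "x = madd M z u"
      unfolding coset_of_def by blast
    have uM: "u \<in> mcarrier M" using u aug_sub_subset by auto
    have "madd M (madd M z w) (madd M (mneg A M w) u) = madd M z (madd M (madd M w (mneg A M w)) u)"
      using z wM uM by (simp add: lmod_add_assoc[OF lmodule_M] lmod_neg_closed[OF lmodule_M]
          lmod_add_closed[OF lmodule_M])
    also have "\<dots> = x" using u z wM uM lmodule_M by simp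
    finally show "x \<in> \<pi> (madd M z w)"
      using aug_sub_add[OF aug_sub_act[OF w] u(1)] unfolding coset_of_def mneg_def by blast
  }
qed

lemma some_coset_of:
  assumes "m \<in> mcarrier M"
  shows "\<exists>u\<in>K. (SOME x. x \<in> \<pi> m) = madd M m u"
proof -
  have "m \<in> \<pi> m"
    using assms aug_sub_zero lmodule_M unfolding coset_of_def by force
  then have "(SOME x. x \<in> \<pi> m) \<in> \<pi> m" by (rule someI)
  then show ?thesis unfolding coset_of_def by blast
qed

abbreviation "N \<equiv> quot_mod B i p M"

lemma quot_mod_carrier: "mcarrier N = \<pi> ` mcarrier M"
  and quot_mod_zero: "mzero N = \<pi> (mzero M)"
  unfolding quot_mod_def Let_def by simp_all

lemma quot_mod_add:
  assumes x: "x \<in> mcarrier M" and y: "y \<in> mcarrier M"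
  shows "madd N (\<pi> x) (\<pi> y) = \<pi> (madd M x y)"
proof -
  obtain u where u: "u \<in> K" "(SOME z. z \<in> \<pi> x) = madd M x u" using some_coset_of[OF x] by blast
  obtain v where v: "v \<in> K" "(SOME z. z \<in> \<pi> y) = madd M y v" using some_coset_of[OF y] by blast
  have "madd N (\<pi> x) (\<pi> y) = \<pi> (madd M (madd M x u) (madd M y v))"
    unfolding quot_mod_def Let_def using u v by simp
  also have "\<dots> = \<pi> (madd M (madd M x y) (madd M u v))"
  proof -
    have "u \<in> mcarrier M" "v \<in> mcarrier M" using u v aug_sub_subset by auto
    then show ?thesis using lmod_add_swap[OF lmodule_M x _ y] by simp
  qed
  also have "\<dots> = \<pi> (madd M x y)"
    using coset_of_add_aug_sub aug_sub_add[OF u(1) v(1)] x y lmodule_M by simp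
  finally show ?thesis .
qed

text \<open>\<open>quot_mod\<close> acts through an arbitrary preimage \<open>a'\<close> of \<open>p a\<close>; the choice is harmless
  because \<open>a' - a \<in> ker p\<close> and \<open>(ker p) M \<subseteq> B\<^sup>+M\<close>.\<close>

lemma quot_mod_act:
  assumes x: "x \<in> mcarrier M"
  shows "act N (p a) (\<pi> x) = \<pi> (act M a x)"
proof -
  define a' where "a' = (SOME a'. p a' = p a)"
  have pa': "p a' = p a" unfolding a'_def by (rule someI) simp
  obtain u where u: "u \<in> K" "(SOME z. z \<in> \<pi> x) = madd M x u" using some_coset_of[OF x] by blast
  have uM: "u \<in> mcarrier M" using u aug_sub_subset by auto
  have diff: "p (vadd A a' (vsmult A (-1) a)) = vzero H"
    unfolding p_add p_smult pa' by (rule kalg_add_neg_right[OF kalg_H])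
  have "act M a' x = madd M (act M a x) (act M (vadd A a' (vsmult A (-1) a)) x)"
    using lmod_act_add_left[OF lmodule_M x] kalg_add_diff_cancel[OF kalg_A, of a a'] by metis
  then have a'x: "\<pi> (act M a' x) = \<pi> (act M a x)"
    using coset_of_add_aug_sub ker_p_act_in_aug_sub[OF diff x] x lmodule_M by simp
  have "act N (p a) (\<pi> x) = \<pi> (act M a' (madd M x u))"
    unfolding quot_mod_def Let_def a'_def using u by simp
  also have "\<dots> = \<pi> (madd M (act M a' x) (act M a' u))"
    using lmod_act_add_right[OF lmodule_M x uM] by simp
  also have "\<dots> = \<pi> (act M a x)"
    using coset_of_add_aug_sub aug_sub_act[OF u(1)] x lmodule_M a'x by simp
  finally show ?thesis .
qed

lemma lmodule_restrict_quot_mod: "lmodule A (restrict_scalars p N)"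
  by (rule lmodule_image[OF lmodule_M, of _ \<pi>])
    (simp_all add: quot_mod_carrier quot_mod_add quot_mod_zero quot_mod_act)

lemma lmodule_quot_mod: "lmodule H N"
  using lmodule_restrict_quot_mod lmodule_restrict_scalars_p_iff by blast

lemma mod_hom_restrict_vanishes_on_aug_sub:
  assumes lX: "lmodule H X" and g: "mod_hom M (restrict_scalars p X) g" and u: "u \<in> K"
  shows "g u = mzero X"
proof -
  have lXA: "lmodule A (restrict_scalars p X)" using lX lmodule_restrict_scalars_p_iff by blast
  obtain l where u: "u = msum M (map (\<lambda>(b, x). act M (i b) x) l)"
    and l: "\<forall>(b, x)\<in>set l. counit B b = 0 \<and> x \<in> mcarrier M"
    using u unfolding aug_sub_def by blast
  have "\<forall>y\<in>set (map g (map (\<lambda>(b, x). act M (i b) x) l)). y = mzero X"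
    using l mod_hom_act[OF g] mod_hom_closed[OF g] p_i_aug lmod_act_vzero[OF kalg_H lX] by fastforce
  then show ?thesis
    unfolding u using mod_hom_msum[OF lmodule_M lXA g aug_terms_closed[OF l]] msum_zeros[OF lXA]
    by simp
qed

lemma quot_mod_factor:
  assumes lX: "lmodule H X" and g: "mod_hom M (restrict_scalars p X) g"
  defines "s Y \<equiv> g (SOME m. m \<in> Y)"
  shows "mod_hom N X s" and "\<And>m. m \<in> mcarrier M \<Longrightarrow> s (\<pi> m) = g m"
proof -
  show s_\<pi>: "s (\<pi> m) = g m" if m: "m \<in> mcarrier M" for m
  proof -
    obtain u where u: "u \<in> K" "(SOME x. x \<in> \<pi> m) = madd M m u" using some_coset_of[OF m] by blast
    then have "s (\<pi> m) = madd X (g m) (g u)"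
      unfolding s_def using mod_hom_add[OF g m] aug_sub_subset by auto
    then show ?thesis
      using mod_hom_restrict_vanishes_on_aug_sub[OF lX g u(1)] mod_hom_closed[OF g m] lX by simp
  qed
  show "mod_hom N X s"
    unfolding mod_hom_def quot_mod_carrier
  proof (intro conjI ballI allI)
    show "s ` \<pi> ` mcarrier M \<subseteq> mcarrier X"
      using s_\<pi> mod_hom_closed[OF g] by auto
  next
    fix y z assume "y \<in> \<pi> ` mcarrier M" "z \<in> \<pi> ` mcarrier M"
    then show "s (madd N y z) = madd X (s y) (s z)"
      using s_\<pi> quot_mod_add mod_hom_add[OF g] lmodule_M by auto
  next
    fix h y assume "y \<in> \<pi> ` mcarrier M"
    moreover obtain a where "h = p a" using surj_p by (metis surjD)
    ultimately show "s (act N h y) = act X h (s y)"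
      using s_\<pi> quot_mod_act mod_hom_act[OF g] lmodule_M by auto
  qed
qed

lemma quot_mod_split_surj:
  assumes lX: "lmodule H X" and e: "mod_hom X N e" and e_surj: "e ` mcarrier X = mcarrier N"
  shows "\<exists>s. mod_hom N X s \<and> (\<forall>y\<in>mcarrier N. e (s y) = y)"
proof -
  have lXA: "lmodule A (restrict_scalars p X)" using lX lmodule_restrict_scalars_p_iff by blast
  have eA: "mod_hom (restrict_scalars p X) (restrict_scalars p N) e"
    and \<pi>A: "mod_hom M (restrict_scalars p N) \<pi>"
    using e unfolding mod_hom_def by (auto simp: quot_mod_carrier quot_mod_add quot_mod_act)
  obtain g where g: "mod_hom M (restrict_scalars p X) g" and eg: "\<forall>m\<in>mcarrier M. e (g m) = \<pi> m"
    using projective_lifting[OF kalg_A pM lXA lmodule_restrict_quot_mod eA \<pi>A] e_surj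
      quot_mod_carrier by auto
  then show ?thesis
    using quot_mod_factor[OF lX g] quot_mod_carrier by auto
qed

end

theorem proposition3p19:
  fixes B :: "('k::field, 'b) hopf" and A :: "('k, 'a) hopf" and H :: "('k, 'h) hopf"
    and i :: "'b \<Rightarrow> 'a" and p :: "'a \<Rightarrow> 'h"
    and M :: "('a, 'm) lmod"
    and P :: "nat \<Rightarrow> ('h, 'c) lmod" and d :: "nat \<Rightarrow> 'c \<Rightarrow> 'c" and e :: "'c \<Rightarrow> 'm set"
  assumes "exact_hopf_seq B A H i p"
    and "projective A M"
    and "proj_resolution H (quot_mod B i p M) P d e"
    and "n \<ge> 1"
  shows "tor_homology_vanishes H P d n"
proof -
  interpret exact_sequence_module B A H i p M
    using assms(1,2) by (rule exact_sequence_module.intro)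
  have "lmodule H (P 0)" and "mod_hom (P 0) N e" and "e ` mcarrier (P 0) = mcarrier N"
    using assms(3) unfolding proj_resolution_def projective_def by auto
  then obtain s where s: "mod_hom N (P 0) s" and es: "\<forall>y\<in>mcarrier N. e (s y) = y"
    using quot_mod_split_surj by metis
  show ?thesis
    using tor_homology_vanishes_split_resolution[OF kalg_H assms(3) lmodule_quot_mod s] es assms(4)
    by blast
qed

end
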